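(* Let $Y$ be a real-valued random variable (representing the conditional distribution of the potential reward $R(a,x)$ given $A=a$, $X=x$) with finite second moment, and let $\alpha\ge 0$. Consider the problem $$\min_{D}\ \mathbb{E}\big[Y\,D(Y)\big]$$ over measurable functions $D:\mathbb{R}\to\mathbb{R}$ subject to (i) $D(r)\ge 0$ for all $r$, (ii) $\mathbb{E}[D(Y)]=1$, and (iii) $D(r_1)\le e^{2\alpha} D(r_2)$ for all $r_1,r_2$. Then the optimal value of this problem equals $\lambda^*$, where $\lambda^*$ is a minimizer over $\lambda\in\mathbb{R}$ of $$\mathbb{E}\big[\ell_\alpha(Y,\lambda)\big],\qquad \ell_\alpha(y,\lambda)=\{y-\lambda\}_+^2+e^{2\alpha}\{y-\lambda\}_-^2 ,$$ where $\{t\}_+=\max(t,0)$ and $\{t\}_-=\max(-t,0)$. Equivalently, with conditioning on $A=a$, $X=x$, the value $\min_D \mathbb{E}[R(a,x)D(R(a,x))\mid A=a,X=x]$ equals $f^*_{a,a'}(x)$, where $f^*_{a,a'}$ minimizes $\mathbb{E}[\ell_\alpha(R(a,x),f_{a,a'}(x))\mid A=a,X=x]$ over functions $f_{a,a'}$.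
   Context: In the paper, $D$ plays the role of the Radon–Nikodym ratio $D(r,x,a,a')=\mathrm{d}P_{R(a,x)\mid A=a',X=x}/\mathrm{d}P_{R(a,x)\mid A=a,X=x}(r)$ between conditional laws of the potential reward under a perturbed logging policy, and the constrained minimum gives a lower bound on $\mathbb{E}[R(a,x)\mid A=a',X=x]$ under uncertainty level $\alpha$. *)

theory Defs
  imports "HOL-Probability.Probability"
begin

definition pos_part :: "real \<Rightarrow> real" where
  "pos_part t = max t 0"

definition neg_part :: "real \<Rightarrow> real" where
  "neg_part t = max (- t) 0"

definition ell_alpha :: "real \<Rightarrow> real \<Rightarrow> real \<Rightarrow> real" where
  "ell_alpha \<alpha> y lam = (pos_part (y - lam))\<^sup>2 + exp (2 * \<alpha>) * (neg_part (y - lam))\<^sup>2"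

definition feasible_D :: "'a measure \<Rightarrow> ('a \<Rightarrow> real) \<Rightarrow> real \<Rightarrow> (real \<Rightarrow> real) \<Rightarrow> bool" where
  "feasible_D M Y \<alpha> D \<longleftrightarrow>
     D \<in> borel_measurable borel \<and>
     (\<forall>r. D r \<ge> 0) \<and>
     (\<integral>\<omega>. D (Y \<omega>) \<partial>M) = 1 \<and>
     (\<forall>r1 r2. D r1 \<le> exp (2 * \<alpha>) * D r2)"

end

theory Submission
  imports Defs
begin

text \<open>Write \<open>c = exp (2 * \<alpha>)\<close> and let \<open>w t\<close> be \<open>1\<close> for \<open>t \<ge> 0\<close> and \<open>c\<close> for \<open>t < 0\<close>.
  Then \<open>ell_alpha \<alpha> y \<lambda> = w (y - \<lambda>) * (y - \<lambda>)\<^sup>2\<close>, an expectile loss, and the quadratic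
  majorant \<open>w(t - h) (t - h)\<^sup>2 \<le> w(t) t\<^sup>2 - 2 h w(t) t + c h\<^sup>2\<close> turns minimality of \<open>\<lambda>\<^sup>*\<close>
  into the moment condition \<open>E[w (Y - \<lambda>\<^sup>*) (Y - \<lambda>\<^sup>*)] = 0\<close> without differentiating
  under the integral. By this condition \<open>D\<^sup>* = w (\<cdot> - \<lambda>\<^sup>*) / E[w (Y - \<lambda>\<^sup>*)]\<close> is feasible
  with \<open>E[Y D\<^sup>*(Y)] = \<lambda>\<^sup>*\<close>. Conversely, a feasible \<open>D\<close> takes values between
  \<open>m = inf D\<close> and \<open>c m\<close>, so \<open>(y - \<lambda>\<^sup>*) D y \<ge> m w (y - \<lambda>\<^sup>*) (y - \<lambda>\<^sup>*)\<close> pointwise, and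
  integrating gives \<open>E[Y D(Y)] \<ge> \<lambda>\<^sup>*\<close>.\<close>

definition asym_weight :: "real \<Rightarrow> real \<Rightarrow> real" where
  "asym_weight c t = (if 0 \<le> t then 1 else c)"

lemma asym_weight_bounds:
  assumes "1 \<le> c"
  shows "1 \<le> asym_weight c t" and "asym_weight c t \<le> c"
  using assms by (auto simp: asym_weight_def)

lemma asym_weight_ratio_le:
  assumes "1 \<le> c"
  shows "asym_weight c s \<le> c * asym_weight c t"
proof -
  have "c * 1 \<le> c * asym_weight c t"
    using assms asym_weight_bounds(1)[OF assms] by (intro mult_left_mono) auto
  then show ?thesis using asym_weight_bounds(2)[OF assms, of s] by simp
qed

lemma abs_asym_weight_le: "\<bar>asym_weight c t\<bar> \<le> max 1 \<bar>c\<bar>"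
  by (simp add: asym_weight_def)

lemma borel_measurable_asym_weight [measurable]: "asym_weight c \<in> borel_measurable borel"
  unfolding asym_weight_def[abs_def] by measurable

lemma ell_alpha_eq_asym_weight:
  "ell_alpha \<alpha> y l = asym_weight (exp (2 * \<alpha>)) (y - l) * (y - l)\<^sup>2"
  by (simp add: ell_alpha_def asym_weight_def pos_part_def neg_part_def power2_commute)

lemma asym_weight_square_shift_le:
  assumes "1 \<le> c"
  shows "asym_weight c (t - h) * (t - h)\<^sup>2
    \<le> asym_weight c t * t\<^sup>2 - 2 * h * (asym_weight c t * t) + c * h\<^sup>2"
proof -
  have taylor: "asym_weight c t * t\<^sup>2 - 2 * h * (asym_weight c t * t) + c * h\<^sup>2
      = asym_weight c t * (t - h)\<^sup>2 + (c - asym_weight c t) * h\<^sup>2"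
    by (simp add: power2_eq_square algebra_simps)
  have "asym_weight c (t - h) * (t - h)\<^sup>2 \<le> asym_weight c t * (t - h)\<^sup>2 + (c - asym_weight c t) * h\<^sup>2"
  proof (cases "0 \<le> t \<longleftrightarrow> 0 \<le> t - h")
    case True
    then show ?thesis using asym_weight_bounds[OF assms, of t] by (simp add: asym_weight_def)
  next
    case False
    then consider "0 \<le> t" "t < h" | "t < 0" "h \<le> t" by linarith
    then show ?thesis
    proof cases
      case 1
      have "(t - h)\<^sup>2 \<le> h\<^sup>2" using 1 by (simp flip: abs_le_square_iff)
      then have "(c - 1) * (t - h)\<^sup>2 \<le> (c - 1) * h\<^sup>2" using assms by (intro mult_left_mono) auto
      then show ?thesis using 1 by (simp add: asym_weight_def algebra_simps)
    next
      case 2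
      then show ?thesis using mult_right_mono[OF assms, of "(t - h)\<^sup>2"] by (simp add: asym_weight_def)
    qed
  qed
  then show ?thesis unfolding taylor .
qed

lemma eq_0_if_quadratic_nonneg:
  fixes c g :: real
  assumes "0 < c" and "\<And>h. 0 \<le> c * h\<^sup>2 - 2 * h * g"
  shows "g = 0"
proof -
  have "0 \<le> c * (g / c)\<^sup>2 - 2 * (g / c) * g" by (rule assms(2))
  also have "\<dots> = - (g\<^sup>2 / c)" using assms(1) by (simp add: power2_eq_square field_simps)
  finally show ?thesis using assms(1) by (simp add: divide_le_0_iff)
qed

lemma ratio_bounded_le_mult_Inf:
  fixes D :: "'b \<Rightarrow> real"
  assumes "0 < c" and "\<And>r. 0 \<le> D r" and "\<And>r1 r2. D r1 \<le> c * D r2"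
  shows "D r \<le> c * (INF s. D s)"
proof -
  have "D r / c \<le> (INF s. D s)"
    using assms by (intro cINF_greatest) (auto simp: field_simps mult.commute)
  then show ?thesis using assms(1) by (simp add: field_simps)
qed

lemma mult_asym_weight_le:
  assumes "m \<le> d" and "d \<le> c * m"
  shows "m * (asym_weight c t * t) \<le> d * t"
proof (cases "0 \<le> t")
  case True
  then show ?thesis using assms(1) by (simp add: asym_weight_def mult_right_mono)
next
  case False
  then have "(c * m) * t \<le> d * t" using assms(2) by (intro mult_right_mono_neg) auto
  then show ?thesis using False by (simp add: asym_weight_def ac_simps)
qed

lemma integrable_mult_bounded:
  fixes f g :: "'b \<Rightarrow> real"
  assumes "integrable M f" and "g \<in> borel_measurable M" and "\<And>x. \<bar>g x\<bar> \<le> B"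
  shows "integrable M (\<lambda>x. g x * f x)"
proof (rule Bochner_Integration.integrable_bound)
  show "integrable M (\<lambda>x. B * f x)" using assms(1) by simp
  show "(\<lambda>x. g x * f x) \<in> borel_measurable M"
    using assms(1,2) by (simp add: borel_measurable_integrable)
  show "AE x in M. norm (g x * f x) \<le> norm (B * f x)"
  proof (intro AE_I2)
    fix x
    have "\<bar>g x\<bar> * \<bar>f x\<bar> \<le> \<bar>B\<bar> * \<bar>f x\<bar>"
      using assms(3)[of x] by (intro mult_right_mono) auto
    then show "norm (g x * f x) \<le> norm (B * f x)" by (simp add: abs_mult)
  qed
qed

definition optimal_D :: "'a measure \<Rightarrow> ('a \<Rightarrow> real) \<Rightarrow> real \<Rightarrow> real \<Rightarrow> real \<Rightarrow> real" where
  "optimal_D M Y \<alpha> lam r =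
     asym_weight (exp (2 * \<alpha>)) (r - lam) / (\<integral>\<omega>. asym_weight (exp (2 * \<alpha>)) (Y \<omega> - lam) \<partial>M)"

context prob_space
begin

lemma integrable_asym_weight_comp:
  assumes "Y \<in> borel_measurable M"
  shows "integrable M (\<lambda>\<omega>. asym_weight c (Y \<omega> - l))"
  using assms abs_asym_weight_le by (intro integrable_const_bound[where B = "max 1 \<bar>c\<bar>"]) auto

lemma integrable_asym_weight_residual:
  assumes "integrable M Y"
  shows "integrable M (\<lambda>\<omega>. asym_weight c (Y \<omega> - l) * (Y \<omega> - l))"
  using assms borel_measurable_integrable[OF assms] abs_asym_weight_le
  by (intro integrable_mult_bounded[where B = "max 1 \<bar>c\<bar>"]) auto

lemma integrable_ell_alpha:
  assumes "Y \<in> borel_measurable M" and "integrable M (\<lambda>\<omega>. (Y \<omega>)\<^sup>2)"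
  shows "integrable M (\<lambda>\<omega>. ell_alpha \<alpha> (Y \<omega>) l)"
proof -
  have "integrable M Y" using assms by (rule square_integrable_imp_integrable)
  then have "integrable M (\<lambda>\<omega>. (Y \<omega>)\<^sup>2 - 2 * l * Y \<omega> + l\<^sup>2)" using assms(2) by auto
  moreover have "(\<lambda>\<omega>. (Y \<omega>)\<^sup>2 - 2 * l * Y \<omega> + l\<^sup>2) = (\<lambda>\<omega>. (Y \<omega> - l)\<^sup>2)"
    by (simp add: fun_eq_iff power2_diff algebra_simps)
  ultimately show ?thesis
    unfolding ell_alpha_eq_asym_weight using assms(1) abs_asym_weight_le[of "exp (2 * \<alpha>)"]
    by (intro integrable_mult_bounded[where B = "max 1 \<bar>exp (2 * \<alpha>)\<bar>"]) simp_all
qed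

lemma integral_asym_weight_residual_eq_0_if_minimizer:
  assumes "Y \<in> borel_measurable M" and "integrable M (\<lambda>\<omega>. (Y \<omega>)\<^sup>2)" and "0 \<le> \<alpha>"
    and min: "\<And>l. (\<integral>\<omega>. ell_alpha \<alpha> (Y \<omega>) lam \<partial>M) \<le> (\<integral>\<omega>. ell_alpha \<alpha> (Y \<omega>) l \<partial>M)"
  shows "(\<integral>\<omega>. asym_weight (exp (2 * \<alpha>)) (Y \<omega> - lam) * (Y \<omega> - lam) \<partial>M) = 0"
proof -
  define c where "c = exp (2 * \<alpha>)"
  define \<psi> where "\<psi> \<omega> = asym_weight c (Y \<omega> - lam) * (Y \<omega> - lam)" for \<omega>
  have c1: "1 \<le> c" using assms(3) by (simp add: c_def)
  have ell: "integrable M (\<lambda>\<omega>. ell_alpha \<alpha> (Y \<omega>) l)" for l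
    using assms(1,2) by (rule integrable_ell_alpha)
  have \<psi>: "integrable M \<psi>"
    unfolding \<psi>_def
    using integrable_asym_weight_residual square_integrable_imp_integrable[OF assms(1,2)] .
  have "0 \<le> c * h\<^sup>2 - 2 * h * (\<integral>\<omega>. \<psi> \<omega> \<partial>M)" for h
  proof -
    have shift: "ell_alpha \<alpha> (Y \<omega>) (lam + h) \<le> ell_alpha \<alpha> (Y \<omega>) lam - 2 * h * \<psi> \<omega> + c * h\<^sup>2" for \<omega>
    proof -
      have "Y \<omega> - (lam + h) = (Y \<omega> - lam) - h" by simp
      then show ?thesis
        using asym_weight_square_shift_le[OF c1, of "Y \<omega> - lam" h]
        by (simp only: ell_alpha_eq_asym_weight c_def \<psi>_def)
    qed
    have "(\<integral>\<omega>. ell_alpha \<alpha> (Y \<omega>) (lam + h) \<partial>M)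
        \<le> (\<integral>\<omega>. ell_alpha \<alpha> (Y \<omega>) lam - 2 * h * \<psi> \<omega> + c * h\<^sup>2 \<partial>M)"
      using ell \<psi> shift by (intro integral_mono) auto
    also have "\<dots> = (\<integral>\<omega>. ell_alpha \<alpha> (Y \<omega>) lam \<partial>M) - 2 * h * (\<integral>\<omega>. \<psi> \<omega> \<partial>M) + c * h\<^sup>2"
      using ell \<psi> by (simp add: prob_space)
    finally show ?thesis using min[of "lam + h"] by linarith
  qed
  then have "(\<integral>\<omega>. \<psi> \<omega> \<partial>M) = 0" using c1 by (intro eq_0_if_quadratic_nonneg[of c]) auto
  then show ?thesis by (simp add: \<psi>_def c_def)
qed

lemma integral_asym_weight_ge_1:
  assumes "Y \<in> borel_measurable M" and "1 \<le> c"
  shows "1 \<le> (\<integral>\<omega>. asym_weight c (Y \<omega> - lam) \<partial>M)"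
proof -
  have "(\<integral>\<omega>. 1 \<partial>M) \<le> (\<integral>\<omega>. asym_weight c (Y \<omega> - lam) \<partial>M)"
    using assms asym_weight_bounds(1) by (intro integral_mono integrable_asym_weight_comp) auto
  then show ?thesis by (simp add: prob_space)
qed

lemma feasible_optimal_D:
  assumes "Y \<in> borel_measurable M" and "0 \<le> \<alpha>"
  shows "feasible_D M Y \<alpha> (optimal_D M Y \<alpha> lam)"
proof -
  define c where "c = exp (2 * \<alpha>)"
  define E where "E = (\<integral>\<omega>. asym_weight c (Y \<omega> - lam) \<partial>M)"
  have c1: "1 \<le> c" using assms(2) by (simp add: c_def)
  have E1: "1 \<le> E" unfolding E_def using assms(1) c1 by (rule integral_asym_weight_ge_1)
  have D: "optimal_D M Y \<alpha> lam = (\<lambda>r. asym_weight c (r - lam) / E)"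
    by (simp add: fun_eq_iff optimal_D_def c_def E_def)
  have "asym_weight c (r1 - lam) / E \<le> c * (asym_weight c (r2 - lam) / E)" for r1 r2
    using asym_weight_ratio_le[OF c1] E1 by (simp add: divide_right_mono)
  moreover have "0 \<le> asym_weight c (r - lam) / E" for r
    using asym_weight_bounds(1)[OF c1] E1 by (simp add: order_trans[OF zero_le_one])
  ultimately show ?thesis
    unfolding feasible_D_def D using E1 by (simp add: E_def c_def[symmetric])
qed

lemma integral_mult_optimal_D:
  assumes "integrable M Y" and "0 \<le> \<alpha>"
    and moment: "(\<integral>\<omega>. asym_weight (exp (2 * \<alpha>)) (Y \<omega> - lam) * (Y \<omega> - lam) \<partial>M) = 0"
  shows "(\<integral>\<omega>. Y \<omega> * optimal_D M Y \<alpha> lam (Y \<omega>) \<partial>M) = lam"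
proof -
  define c where "c = exp (2 * \<alpha>)"
  define E where "E = (\<integral>\<omega>. asym_weight c (Y \<omega> - lam) \<partial>M)"
  have c1: "1 \<le> c" using assms(2) by (simp add: c_def)
  have Y: "Y \<in> borel_measurable M" using assms(1) by (rule borel_measurable_integrable)
  have E1: "1 \<le> E" unfolding E_def using Y c1 by (rule integral_asym_weight_ge_1)
  have "(\<integral>\<omega>. Y \<omega> * asym_weight c (Y \<omega> - lam) \<partial>M)
      = (\<integral>\<omega>. asym_weight c (Y \<omega> - lam) * (Y \<omega> - lam) + lam * asym_weight c (Y \<omega> - lam) \<partial>M)"
    by (simp add: algebra_simps)
  also have "\<dots> = lam * E"
    using moment assms(1) Y
    by (simp add: E_def c_def integrable_asym_weight_residual integrable_asym_weight_comp)
  finally show ?thesis using E1 by (simp add: optimal_D_def c_def[symmetric] E_def[symmetric])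
qed

lemma integral_mult_feasible_D_ge:
  assumes "integrable M Y" and "0 \<le> \<alpha>" and "feasible_D M Y \<alpha> D"
    and moment: "(\<integral>\<omega>. asym_weight (exp (2 * \<alpha>)) (Y \<omega> - lam) * (Y \<omega> - lam) \<partial>M) = 0"
  shows "lam \<le> (\<integral>\<omega>. Y \<omega> * D (Y \<omega>) \<partial>M)"
proof -
  define c where "c = exp (2 * \<alpha>)"
  define m where "m = (INF r. D r)"
  have D_meas [measurable]: "D \<in> borel_measurable borel" and D_nonneg: "\<And>r. 0 \<le> D r"
    and D_int: "(\<integral>\<omega>. D (Y \<omega>) \<partial>M) = 1" and D_ratio: "\<And>r1 r2. D r1 \<le> c * D r2"
    using assms(3) unfolding feasible_D_def c_def by auto
  have Y [measurable]: "Y \<in> borel_measurable M" using assms(1) by (rule borel_measurable_integrable)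
  have Inf_le: "m \<le> D r" for r
    unfolding m_def using D_nonneg by (intro cINF_lower bdd_belowI2) auto
  have le_c_Inf: "D r \<le> c * m" for r
    unfolding m_def using D_nonneg D_ratio by (intro ratio_bounded_le_mult_Inf) (auto simp: c_def)
  have D_bound: "\<bar>D r\<bar> \<le> c * m" for r using D_nonneg[of r] le_c_Inf[of r] by simp
  have DY: "integrable M (\<lambda>\<omega>. D (Y \<omega>))"
    using D_bound by (intro integrable_const_bound[where B = "c * m"]) auto
  have YDY: "integrable M (\<lambda>\<omega>. D (Y \<omega>) * Y \<omega>)"
    using assms(1) D_bound by (intro integrable_mult_bounded[where B = "c * m"]) auto
  have DY_res: "integrable M (\<lambda>\<omega>. D (Y \<omega>) * (Y \<omega> - lam))"
    unfolding right_diff_distrib using DY YDY by (intro Bochner_Integration.integrable_diff) auto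
  have "0 = (\<integral>\<omega>. m * (asym_weight c (Y \<omega> - lam) * (Y \<omega> - lam)) \<partial>M)"
    using moment by (simp add: c_def)
  also have "\<dots> \<le> (\<integral>\<omega>. D (Y \<omega>) * (Y \<omega> - lam) \<partial>M)"
    using Inf_le le_c_Inf assms(1) DY_res
    by (intro integral_mono mult_asym_weight_le) (auto intro: integrable_asym_weight_residual)
  also have "\<dots> = (\<integral>\<omega>. Y \<omega> * D (Y \<omega>) \<partial>M) - lam"
    using DY YDY D_int by (simp add: right_diff_distrib mult.commute)
  finally show ?thesis by simp
qed

end

theorem lemma2:
  fixes M :: "'a measure" and Y :: "'a \<Rightarrow> real" and \<alpha> lam_star :: real
  assumes "prob_space M"
    and "Y \<in> borel_measurable M"
    and "integrable M (\<lambda>\<omega>. (Y \<omega>)\<^sup>2)"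
    and "\<alpha> \<ge> 0"
    and "\<forall>lam. (\<integral>\<omega>. ell_alpha \<alpha> (Y \<omega>) lam_star \<partial>M) \<le> (\<integral>\<omega>. ell_alpha \<alpha> (Y \<omega>) lam \<partial>M)"
  shows "(\<exists>D. feasible_D M Y \<alpha> D \<and> (\<integral>\<omega>. Y \<omega> * D (Y \<omega>) \<partial>M) = lam_star)
         \<and> (\<forall>D. feasible_D M Y \<alpha> D \<longrightarrow> (\<integral>\<omega>. Y \<omega> * D (Y \<omega>) \<partial>M) \<ge> lam_star)"
proof -
  interpret prob_space M by fact
  have Y: "integrable M Y" using assms(2,3) by (rule square_integrable_imp_integrable)
  have moment: "(\<integral>\<omega>. asym_weight (exp (2 * \<alpha>)) (Y \<omega> - lam_star) * (Y \<omega> - lam_star) \<partial>M) = 0"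
    using assms(2-5) by (intro integral_asym_weight_residual_eq_0_if_minimizer) auto
  show ?thesis
    using feasible_optimal_D[OF assms(2,4)] integral_mult_optimal_D[OF Y assms(4) moment]
      integral_mult_feasible_D_ge[OF Y assms(4) _ moment]
    by blast
qed

end
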